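(* The Skolem problem is reducible to the Point-To-Point Reachability problem (P2P) for polynomial recursive sequences: there is an algorithm that, given an instance of the Skolem problem (a linear recurrence sequence $u$), computes an instance of P2P (a system of polynomial recursive sequences together with a target vector) such that $u$ has a zero if and only if the system reaches the target vector. Consequently, a decision procedure for P2P would yield a decision procedure for the Skolem problem.
   Context: The Skolem problem: given $k\ge1$, coefficients $a_0,\dots,a_{k-1}\in\mathbb{Q}$ with $a_0\neq0$ and initial values $u(0),\dots,u(k-1)\in\mathbb{Q}$, defining the linear recurrence sequence $u:\mathbb{N}_0\to\mathbb{Q}$ by $u(n+k)=\sum_{i=0}^{k-1}a_iu(n+i)$, decide whether there exists $m\in\mathbb{N}_0$ with $u(m)=0$. The P2P problem: given $k\ge1$, polynomials $p_1,\dots,p_k\in\mathbb{Q}[y_1,\dots,y_k]$, initial values $u_1(0),\dots,u_k(0)\in\mathbb{Q}$, defining sequences by $u_i(n+1)=p_i(u_1(n),\dots,u_k(n))$ for all $n\ge0$, and a target vector $(t_1,\dots,t_k)\in\mathbb{Q}^k$, decide whether there exists $m\in\mathbb{N}_0$ with $u_i(m)=t_i$ for all $1\le i\le k$. *)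

theory Defs
  imports Complex_Main "HOL-Library.Nat_Bijection"
begin

text \<open>A Skolem instance is a triple (k, a, u0): order k, coefficient list
  a = [a_0,...,a_{k-1}] and initial values u0 = [u(0),...,u(k-1)].\<close>

type_synonym skolem_inst = "nat \<times> rat list \<times> rat list"

definition skolem_wf :: "skolem_inst \<Rightarrow> bool" where
  "skolem_wf I = (case I of (k, a, u0) \<Rightarrow>
     k \<ge> 1 \<and> length a = k \<and> length u0 = k \<and> a ! 0 \<noteq> 0)"

text \<open>Window of k consecutive terms: lrs_window k a u0 n = [u(n),...,u(n+k-1)].\<close>
primrec lrs_window :: "nat \<Rightarrow> rat list \<Rightarrow> rat list \<Rightarrow> nat \<Rightarrow> rat list" where
  "lrs_window k a u0 0 = u0"
| "lrs_window k a u0 (Suc n) =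
     (let w = lrs_window k a u0 n in tl w @ [\<Sum>i<k. a ! i * w ! i])"

text \<open>u(n+k) = sum_{i<k} a_i u(n+i).\<close>
definition lrs :: "skolem_inst \<Rightarrow> nat \<Rightarrow> rat" where
  "lrs I n = (case I of (k, a, u0) \<Rightarrow> hd (lrs_window k a u0 n))"

definition skolem_has_zero :: "skolem_inst \<Rightarrow> bool" where
  "skolem_has_zero I = (\<exists>m. lrs I m = 0)"

text \<open>A multivariate polynomial over Q in variables y_1..y_k is represented as
  a list of monomials (c, [e_1,...,e_k]) standing for c * y_1^e_1 * ... * y_k^e_k.\<close>

type_synonym mpoly_rep = "(rat \<times> nat list) list"

definition mpoly_wf :: "nat \<Rightarrow> mpoly_rep \<Rightarrow> bool" where
  "mpoly_wf k p = (\<forall>m \<in> set p. length (snd m) = k)"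

definition mpoly_eval :: "mpoly_rep \<Rightarrow> rat list \<Rightarrow> rat" where
  "mpoly_eval p y = (\<Sum>(c, e) \<leftarrow> p. c * (\<Prod>i<length e. (y ! i) ^ (e ! i)))"

text \<open>A P2P instance (k, ps, v0, t): polynomials p_1..p_k, initial values and target.\<close>
type_synonym p2p_inst = "nat \<times> mpoly_rep list \<times> rat list \<times> rat list"

definition p2p_wf :: "p2p_inst \<Rightarrow> bool" where
  "p2p_wf J = (case J of (k, ps, v0, t) \<Rightarrow>
     k \<ge> 1 \<and> length ps = k \<and> length v0 = k \<and> length t = k \<and> (\<forall>p \<in> set ps. mpoly_wf k p))"

primrec p2p_state :: "mpoly_rep list \<Rightarrow> rat list \<Rightarrow> nat \<Rightarrow> rat list" where
  "p2p_state ps v0 0 = v0"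
| "p2p_state ps v0 (Suc n) = map (\<lambda>p. mpoly_eval p (p2p_state ps v0 n)) ps"

definition p2p_reaches :: "p2p_inst \<Rightarrow> bool" where
  "p2p_reaches J = (case J of (k, ps, v0, t) \<Rightarrow> \<exists>m. p2p_state ps v0 m = t)"

definition enc_rat :: "rat \<Rightarrow> nat" where
  "enc_rat q = (case quotient_of q of (a, b) \<Rightarrow> prod_encode (int_encode a, int_encode b))"

definition enc_rats :: "rat list \<Rightarrow> nat" where
  "enc_rats xs = list_encode (map enc_rat xs)"

definition enc_skolem :: "skolem_inst \<Rightarrow> nat" where
  "enc_skolem I = (case I of (k, a, u0) \<Rightarrow> prod_encode (k, prod_encode (enc_rats a, enc_rats u0)))"

definition enc_mono :: "rat \<times> nat list \<Rightarrow> nat" where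
  "enc_mono m = prod_encode (enc_rat (fst m), list_encode (snd m))"

definition enc_mpoly :: "mpoly_rep \<Rightarrow> nat" where
  "enc_mpoly p = list_encode (map enc_mono p)"

definition enc_p2p :: "p2p_inst \<Rightarrow> nat" where
  "enc_p2p J = (case J of (k, ps, v0, t) \<Rightarrow>
     prod_encode (k, prod_encode (list_encode (map enc_mpoly ps),
                                  prod_encode (enc_rats v0, enc_rats t))))"

datatype recf = Zero | Succ | Proj nat | Cn recf "recf list" | Pr recf recf | Mn recf

inductive reval :: "recf \<Rightarrow> nat list \<Rightarrow> nat \<Rightarrow> bool" where
  "reval Zero xs 0"
| "reval Succ [x] (Suc x)"
| "i < length xs \<Longrightarrow> reval (Proj i) xs (xs ! i)"
| "list_all2 (\<lambda>g y. reval g xs y) gs ys \<Longrightarrow> reval f ys z \<Longrightarrow> reval (Cn f gs) xs z"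
| "reval f xs y \<Longrightarrow> reval (Pr f g) (0 # xs) y"
| "reval (Pr f g) (n # xs) y \<Longrightarrow> reval g (n # y # xs) z \<Longrightarrow> reval (Pr f g) (Suc n # xs) z"
| "reval f (n # xs) 0 \<Longrightarrow> (\<forall>m<n. \<exists>y. y > 0 \<and> reval f (m # xs) y) \<Longrightarrow> reval (Mn f) xs n"
monos list_all2_mono

end

theory Submission
  imports Defs
begin

(* Let C be the companion matrix of the recurrence and w(n) = (u(n), ..., u(n+k-1)) the window
   of the sequence, so that w(n+1) = C w(n).  The quadratic system y' = y_0 (C y), started at
   w(0), is at time n in the state c(n) w(n), where c(0) = 1 and c(n+1) = c(n)^2 u(n).  The scalar
   c(n) vanishes exactly when some u(j) with j < n does, and then stays zero.  Hence the system
   reaches the zero vector iff u has a zero: if u(m) = 0 the state at time m+1 is zero, and a zero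
   state c(m) w(m) forces c(m) = 0 or u(m) = 0. *)

definition computable :: "nat \<Rightarrow> (nat list \<Rightarrow> nat) \<Rightarrow> bool" where
  "computable n f \<longleftrightarrow> (\<exists>R. \<forall>xs. length xs = n \<longrightarrow> reval R xs (f xs))"

lemma computable_cong:
  "computable n f \<Longrightarrow> (\<And>xs. length xs = n \<Longrightarrow> f xs = g xs) \<Longrightarrow> computable n g"
  unfolding computable_def by metis

lemma computable_nth: "i < n \<Longrightarrow> computable n (\<lambda>xs. xs ! i)"
  unfolding computable_def by (metis reval.intros(3))

lemma computable_compose:
  assumes "computable m h" "length fs = m" "\<forall>f\<in>set fs. computable n f"
  shows "computable n (\<lambda>xs. h (map (\<lambda>f. f xs) fs))"
proof -
  obtain H where H: "\<forall>ys. length ys = m \<longrightarrow> reval H ys (h ys)"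
    using assms(1) computable_def by auto
  have "\<forall>i<length fs. \<exists>R. \<forall>xs. length xs = n \<longrightarrow> reval R xs ((fs ! i) xs)"
    using assms(3) unfolding computable_def by auto
  then obtain Rs where Rs: "\<forall>i<length fs. \<forall>xs. length xs = n \<longrightarrow> reval (Rs i) xs ((fs ! i) xs)"
    by metis
  have "reval (Cn H (map Rs [0..<length fs])) xs (h (map (\<lambda>f. f xs) fs))" if "length xs = n" for xs
  proof (rule reval.intros(4))
    show "list_all2 (\<lambda>R y. reval R xs y) (map Rs [0..<length fs]) (map (\<lambda>f. f xs) fs)"
      using Rs that by (auto simp: list_all2_conv_all_nth)
    show "reval H (map (\<lambda>f. f xs) fs) (h (map (\<lambda>f. f xs) fs))"
      using H assms(2) by simp
  qed
  then show ?thesis unfolding computable_def by blast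
qed

lemma computable_compose1:
  "computable 1 h \<Longrightarrow> computable n f \<Longrightarrow> computable n (\<lambda>xs. h [f xs])"
  using computable_compose[of 1 h "[f]"] by simp

lemma computable_compose2:
  "computable 2 h \<Longrightarrow> computable n f \<Longrightarrow> computable n g \<Longrightarrow> computable n (\<lambda>xs. h [f xs, g xs])"
  using computable_compose[of 2 h "[f, g]"] by simp

lemma computable_compose3:
  "computable 3 h \<Longrightarrow> computable n f \<Longrightarrow> computable n g \<Longrightarrow> computable n e \<Longrightarrow>
    computable n (\<lambda>xs. h [f xs, g xs, e xs])"
  using computable_compose[of 3 h "[f, g, e]"] by simp

lemma computable_compose_drop:
  assumes "computable (length fs + n) h" "\<forall>f\<in>set fs. computable (k + n) f"
  shows "computable (k + n) (\<lambda>xs. h (map (\<lambda>f. f xs) fs @ drop k xs))"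
proof -
  have "computable (k + n) (\<lambda>xs. h (map (\<lambda>f. f xs) (fs @ map (\<lambda>i xs. xs ! (k + i)) [0..<n])))"
    using assms by (intro computable_compose) (auto intro: computable_nth)
  moreover have "map (\<lambda>i. xs ! (k + i)) [0..<n] = drop k xs" if "length xs = k + n" for xs :: "nat list"
    using that by (intro nth_equalityI) auto
  ultimately show ?thesis by (auto simp: comp_def intro: computable_cong)
qed

lemma computable_tl: "computable n f \<Longrightarrow> computable (Suc n) (\<lambda>xs. f (tl xs))"
  using computable_compose_drop[of "[]" n f 1] by (simp add: drop_Suc)

lemma computable_Suc: "computable n f \<Longrightarrow> computable n (\<lambda>xs. Suc (f xs))"
proof -
  have "computable 1 (\<lambda>xs. Suc (hd xs))"
    unfolding computable_def
    by (metis (no_types) One_nat_def length_0_conv length_Suc_conv list.sel(1) reval.intros(2))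
  then show "computable n f \<Longrightarrow> ?thesis" using computable_compose1 by fastforce
qed

lemma computable_const: "computable n (\<lambda>_. c)"
proof (induction c)
  case 0 then show ?case unfolding computable_def by (metis reval.intros(1))
next
  case (Suc c) then show ?case by (rule computable_Suc)
qed

lemma computable_prim_rec:
  assumes "computable n f" "computable (Suc (Suc n)) g"
    and "\<And>ys. length ys = n \<Longrightarrow> h 0 ys = f ys"
    and "\<And>i ys. length ys = n \<Longrightarrow> h (Suc i) ys = g (i # h i ys # ys)"
  shows "computable (Suc n) (\<lambda>xs. h (hd xs) (tl xs))"
proof -
  obtain F where F: "\<forall>ys. length ys = n \<longrightarrow> reval F ys (f ys)"
    using assms(1) computable_def by auto
  obtain G where G: "\<forall>zs. length zs = Suc (Suc n) \<longrightarrow> reval G zs (g zs)"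
    using assms(2) computable_def by auto
  have Pr: "reval (Pr F G) (i # ys) (h i ys)" if "length ys = n" for i ys
  proof (induction i)
    case 0 then show ?case using F that assms(3) by (simp add: reval.intros(5))
  next
    case (Suc i) then show ?case using G that assms(4) by (simp add: reval.intros(6))
  qed
  show ?thesis unfolding computable_def
  proof (intro exI allI impI)
    fix xs :: "nat list" assume "length xs = Suc n"
    then show "reval (Pr F G) xs (h (hd xs) (tl xs))"
      using Pr by (cases xs) auto
  qed
qed

lemma computable_Least:
  assumes "computable (Suc n) (\<lambda>xs. f (hd xs) (tl xs))"
    and "\<And>ys. length ys = n \<Longrightarrow> \<exists>j. f j ys = 0"
  shows "computable n (\<lambda>ys. LEAST j. f j ys = 0)"
proof -
  obtain F where F: "\<forall>xs. length xs = Suc n \<longrightarrow> reval F xs (f (hd xs) (tl xs))"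
    using assms(1) computable_def by auto
  have "reval (Mn F) ys (LEAST j. f j ys = 0)" if ys: "length ys = n" for ys
  proof (rule reval.intros(7))
    show "reval F ((LEAST j. f j ys = 0) # ys) 0"
      using F[rule_format, of "(LEAST j. f j ys = 0) # ys"] ys LeastI_ex[OF assms(2)[OF ys]] by simp
    show "\<forall>m<(LEAST j. f j ys = 0). \<exists>y>0. reval F (m # ys) y"
    proof (intro allI impI)
      fix m assume "m < (LEAST j. f j ys = 0)"
      then have "f m ys \<noteq> 0" by (rule not_less_Least)
      then show "\<exists>y>0. reval F (m # ys) y"
        using F[rule_format, of "m # ys"] ys by auto
    qed
  qed
  then show ?thesis unfolding computable_def by blast
qed

lemma computable_add: "computable n f \<Longrightarrow> computable n g \<Longrightarrow> computable n (\<lambda>xs. f xs + g xs)"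
proof -
  have "computable 2 (\<lambda>xs. hd xs + tl xs ! 0)"
    unfolding numeral_2_eq_2
    by (rule computable_prim_rec[where f = "\<lambda>ys. ys ! 0" and g = "\<lambda>zs. Suc (zs ! 1)"])
      (auto intro: computable_nth computable_Suc)
  then show "computable n f \<Longrightarrow> computable n g \<Longrightarrow> ?thesis"
    using computable_compose2 by fastforce
qed

lemma computable_pred: "computable n f \<Longrightarrow> computable n (\<lambda>xs. f xs - 1)"
proof -
  have "computable 1 (\<lambda>xs. hd xs - 1)"
    unfolding One_nat_def
    by (rule computable_prim_rec[where f = "\<lambda>_. 0" and g = "\<lambda>zs. zs ! 0"])
      (auto intro: computable_nth computable_const)
  then show "computable n f \<Longrightarrow> ?thesis"
    using computable_compose1 by fastforce
qed

lemma computable_diff: "computable n f \<Longrightarrow> computable n g \<Longrightarrow> computable n (\<lambda>xs. f xs - g xs)"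
proof -
  have "computable 2 (\<lambda>xs. tl xs ! 0 - hd xs)"
    unfolding numeral_2_eq_2
    by (rule computable_prim_rec[where f = "\<lambda>ys. ys ! 0" and g = "\<lambda>zs. zs ! 1 - 1"])
      (intro computable_pred computable_nth | simp)+
  then show "computable n f \<Longrightarrow> computable n g \<Longrightarrow> ?thesis"
    using computable_compose2[of _ n g f] by fastforce
qed

lemma computable_if_zero:
  assumes "computable n c" "computable n f" "computable n g"
  shows "computable n (\<lambda>xs. if c xs = 0 then f xs else g xs)"
proof -
  have "computable 3 (\<lambda>xs. if hd xs = 0 then tl xs ! 0 else tl xs ! 1)"
    unfolding numeral_3_eq_3
    by (rule computable_prim_rec[where f = "\<lambda>ys. ys ! 0" and g = "\<lambda>zs. zs ! 3"])
      (auto intro: computable_nth)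
  from computable_compose3[OF this assms] show ?thesis by (rule computable_cong) simp
qed

lemma computable_if_eq:
  assumes "computable n f" "computable n g" "computable n a" "computable n b"
  shows "computable n (\<lambda>xs. if f xs = g xs then a xs else b xs)"
proof -
  have "computable n (\<lambda>xs. if (f xs - g xs) + (g xs - f xs) = 0 then a xs else b xs)"
    using assms by (intro computable_if_zero computable_add computable_diff)
  then show ?thesis by (rule computable_cong) auto
qed

lemma computable_triangle: "computable n f \<Longrightarrow> computable n (\<lambda>xs. triangle (f xs))"
proof -
  have "computable 1 (\<lambda>xs. triangle (hd xs))"
    unfolding One_nat_def
    by (rule computable_prim_rec[where f = "\<lambda>_. 0" and g = "\<lambda>zs. zs ! 1 + Suc (zs ! 0)"])
      (intro computable_add computable_Suc computable_nth computable_const | simp)+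
  then show "computable n f \<Longrightarrow> ?thesis"
    using computable_compose1 by fastforce
qed

lemma computable_prod_encode:
  "computable n f \<Longrightarrow> computable n g \<Longrightarrow> computable n (\<lambda>xs. prod_encode (f xs, g xs))"
  unfolding prod_encode_def by (simp add: computable_add computable_triangle)

lemma computable_hd: "computable (Suc n) hd"
  using computable_nth[of 0 "Suc n"] by (rule computable_cong) (auto simp: length_Suc_conv)

lemma prod_decode_triangle:
  fixes N :: nat
  defines "s \<equiv> LEAST s. N < triangle (Suc s)"
  shows "prod_decode N = (N - triangle s, s - (N - triangle s))"
proof -
  have upper: "N < triangle (Suc s)"
    unfolding s_def by (rule LeastI[of _ N]) simp
  have lower: "triangle s \<le> N"
  proof (cases s)
    case (Suc s')
    then have "s' < s" by simp
    then have "\<not> N < triangle (Suc s')"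
      unfolding s_def by (rule not_less_Least)
    then show ?thesis using Suc by simp
  qed simp
  have "prod_encode (N - triangle s, s - (N - triangle s)) = N"
    using upper lower by (simp add: prod_encode_def)
  then show ?thesis
    using prod_encode_inverse[of "(N - triangle s, s - (N - triangle s))"] by simp
qed

lemma computable_Least_triangle:
  "computable n f \<Longrightarrow> computable n (\<lambda>xs. LEAST s. f xs < triangle (Suc s))"
proof -
  assume f: "computable n f"
  have "computable (Suc n) (\<lambda>xs. Suc (f (tl xs)) - triangle (Suc (hd xs)))"
    by (intro computable_diff computable_Suc computable_triangle computable_tl computable_hd f)
  moreover have "\<exists>s. Suc (f xs) - triangle (Suc s) = 0" for xs
    by (rule exI[of _ "f xs"]) simp
  ultimately have "computable n (\<lambda>xs. LEAST s. Suc (f xs) - triangle (Suc s) = 0)"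
    by (rule computable_Least)
  then show ?thesis by (rule computable_cong) (simp add: less_Suc_eq_le)
qed

lemma computable_fst_prod_decode:
  "computable n f \<Longrightarrow> computable n (\<lambda>xs. fst (prod_decode (f xs)))"
  unfolding prod_decode_triangle fst_conv
  by (intro computable_diff computable_triangle computable_Least_triangle)

lemma computable_snd_prod_decode:
  "computable n f \<Longrightarrow> computable n (\<lambda>xs. snd (prod_decode (f xs)))"
  unfolding prod_decode_triangle snd_conv
  by (intro computable_diff computable_triangle computable_Least_triangle)

text \<open>Inverses of \<open>list_encode (x # xs) = Suc (prod_encode (x, list_encode xs))\<close>.\<close>

definition list_code_tl :: "nat \<Rightarrow> nat" where
  "list_code_tl X = snd (prod_decode (X - 1))"

definition list_code_nth :: "nat \<Rightarrow> nat \<Rightarrow> nat" where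
  "list_code_nth X j = fst (prod_decode ((list_code_tl ^^ j) X - 1))"

lemma list_code_nth_list_encode: "j < length xs \<Longrightarrow> list_code_nth (list_encode xs) j = xs ! j"
proof (induction xs arbitrary: j)
  case (Cons x xs)
  then show ?case
    by (cases j) (simp_all add: list_code_nth_def list_code_tl_def funpow_Suc_right del: funpow.simps)
qed simp

lemma computable_list_code_nth:
  "computable n f \<Longrightarrow> computable n j \<Longrightarrow> computable n (\<lambda>xs. list_code_nth (f xs) (j xs))"
proof -
  have "computable 2 (\<lambda>xs. (list_code_tl ^^ hd xs) (tl xs ! 0))"
    unfolding numeral_2_eq_2 list_code_tl_def
    by (rule computable_prim_rec[where f = "\<lambda>ys. ys ! 0" and g = "\<lambda>zs. snd (prod_decode (zs ! 1 - 1))"])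
      (intro computable_snd_prod_decode computable_pred computable_nth | simp)+
  then show "computable n f \<Longrightarrow> computable n j \<Longrightarrow> ?thesis"
    unfolding list_code_nth_def
    using computable_compose2[of _ n j f]
    by (fastforce intro: computable_fst_prod_decode computable_pred)
qed

lemma computable_list_encode_tabulate:
  assumes g: "computable (Suc n) (\<lambda>xs. g (hd xs) (tl xs))" and m: "computable n m"
  shows "computable n (\<lambda>xs. list_encode (map (\<lambda>j. g j xs) [0..<m xs]))"
proof -
  \<comment> \<open>the list is built from its last entry backwards, so its length is passed along\<close>
  define h where "h t ys = list_encode (map (\<lambda>i. g (hd ys - Suc i) (tl ys)) (rev [0..<t]))" for t ys
  have "computable (3 + n) (\<lambda>zs. g (zs ! 2 - Suc (zs ! 0)) (drop 3 zs))"
    using computable_compose_drop[of "[\<lambda>zs. zs ! 2 - Suc (zs ! 0)]" n "\<lambda>xs. g (hd xs) (tl xs)" 3] g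
    by (simp add: computable_diff computable_Suc computable_nth)
  then have step: "computable (Suc (Suc (Suc n))) (\<lambda>zs. Suc (prod_encode (g (zs ! 2 - Suc (zs ! 0)) (drop 3 zs), zs ! 1)))"
    by (intro computable_Suc computable_prod_encode computable_nth) (simp_all add: numeral_eq_Suc)
  have "computable (Suc (Suc n)) (\<lambda>ys. h (hd ys) (tl ys))"
    by (rule computable_prim_rec[OF computable_const step])
      (auto simp: h_def numeral_eq_Suc length_Suc_conv)
  then have "computable (0 + n) (\<lambda>xs. h (m xs) (m xs # xs))"
    using computable_compose_drop[of "[m, m]" n "\<lambda>ys. h (hd ys) (tl ys)" 0] m by simp
  moreover have "h M (M # xs) = list_encode (map (\<lambda>j. g j xs) [0..<M])" for M xs
    unfolding h_def by (simp, intro arg_cong[where f = list_encode] nth_equalityI) (auto simp: rev_nth)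
  ultimately show ?thesis by simp
qed

lemmas computable_intros =
  computable_const computable_hd computable_tl computable_Suc computable_add computable_diff
  computable_if_eq computable_prod_encode computable_fst_prod_decode computable_snd_prod_decode
  computable_list_code_nth computable_list_encode_tabulate

section \<open>The companion system of a linear recurrence\<close>

definition companion_coeff :: "nat \<Rightarrow> rat list \<Rightarrow> nat \<Rightarrow> nat \<Rightarrow> rat" where
  "companion_coeff k a i j = (if Suc i = k then a ! j else if j = Suc i then 1 else 0)"

definition y0_yj_exps :: "nat \<Rightarrow> nat \<Rightarrow> nat list" where
  "y0_yj_exps k j = map (\<lambda>l. (if l = 0 then 1 else 0) + (if l = j then 1 else 0)) [0..<k]"

definition companion_poly :: "nat \<Rightarrow> rat list \<Rightarrow> nat \<Rightarrow> mpoly_rep" where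
  "companion_poly k a i = map (\<lambda>j. (companion_coeff k a i j, y0_yj_exps k j)) [0..<k]"

definition skolem_to_p2p :: "skolem_inst \<Rightarrow> p2p_inst" where
  "skolem_to_p2p I =
    (case I of (k, a, u0) \<Rightarrow> (k, map (companion_poly k a) [0..<k], u0, replicate k 0))"

lemma length_lrs_window: "length u0 = k \<Longrightarrow> 0 < k \<Longrightarrow> length (lrs_window k a u0 n) = k"
  by (induction n) (simp_all add: Let_def)

lemma lrs_window_Suc_nth:
  assumes "length u0 = k" "i < k"
  shows "lrs_window k a u0 (Suc n) ! i = (\<Sum>j<k. companion_coeff k a i j * lrs_window k a u0 n ! j)"
proof -
  have len: "length (lrs_window k a u0 n) = k"
    using assms by (simp add: length_lrs_window)
  show ?thesis
  proof (cases "Suc i = k")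
    case True
    then show ?thesis using len by (auto simp: Let_def nth_append companion_coeff_def)
  next
    case False
    have "(\<Sum>j<k. companion_coeff k a i j * lrs_window k a u0 n ! j)
        = (\<Sum>j<k. if j = Suc i then lrs_window k a u0 n ! j else 0)"
      using False by (intro sum.cong) (auto simp: companion_coeff_def)
    also have "\<dots> = lrs_window k a u0 n ! Suc i"
      using False assms(2) by simp
    finally show ?thesis using False assms(2) len by (auto simp: Let_def nth_append nth_tl)
  qed
qed

lemma mpoly_eval_companion_poly:
  "mpoly_eval (companion_poly k a i) y = y ! 0 * (\<Sum>j<k. companion_coeff k a i j * y ! j)"
proof -
  have monomial: "(\<Prod>l<k. y ! l ^ ((if l = 0 then 1 else 0) + (if l = j then 1 else 0))) = y ! 0 * y ! j"
    if "j < k" for j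
  proof -
    have "(\<Prod>l<k. y ! l ^ ((if l = 0 then 1 else 0) + (if l = j then 1 else 0)))
        = (\<Prod>l<k. (if l = 0 then y ! l else 1) * (if l = j then y ! l else 1))"
      by (intro prod.cong) (auto simp: power_add)
    then show ?thesis
      using that by (simp add: prod.distrib prod.delta)
  qed
  have "mpoly_eval (companion_poly k a i) y
      = (\<Sum>j<k. companion_coeff k a i j * (\<Prod>l<k. y ! l ^ ((if l = 0 then 1 else 0) + (if l = j then 1 else 0))))"
    by (simp add: mpoly_eval_def companion_poly_def y0_yj_exps_def comp_def
        sum_list_sum_nth atLeast0LessThan)
  also have "\<dots> = y ! 0 * (\<Sum>j<k. companion_coeff k a i j * y ! j)"
    by (simp add: monomial sum_distrib_left mult_ac)
  finally show ?thesis .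
qed

primrec companion_scale :: "nat \<Rightarrow> rat list \<Rightarrow> rat list \<Rightarrow> nat \<Rightarrow> rat" where
  "companion_scale k a u0 0 = 1"
| "companion_scale k a u0 (Suc n) = companion_scale k a u0 n ^ 2 * hd (lrs_window k a u0 n)"

lemma companion_scale_eq_0_iff:
  "companion_scale k a u0 n = 0 \<longleftrightarrow> (\<exists>j<n. hd (lrs_window k a u0 j) = 0)"
  by (induction n) (auto simp: less_Suc_eq)

lemma p2p_state_companion:
  assumes "length u0 = k" "0 < k"
  shows "p2p_state (map (companion_poly k a) [0..<k]) u0 n
       = map (\<lambda>x. companion_scale k a u0 n * x) (lrs_window k a u0 n)"
proof (induction n)
  case (Suc n)
  let ?w = "lrs_window k a u0" and ?c = "companion_scale k a u0 n"
  have len: "length (?w m) = k" for m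
    using assms by (rule length_lrs_window)
  show ?case
  proof (rule nth_equalityI)
    fix i assume "i < length (p2p_state (map (companion_poly k a) [0..<k]) u0 (Suc n))"
    then have i: "i < k" by simp
    have "p2p_state (map (companion_poly k a) [0..<k]) u0 (Suc n) ! i
        = (?c * ?w n ! 0) * (\<Sum>j<k. companion_coeff k a i j * (?c * ?w n ! j))"
      using Suc.IH i assms(2) len by (simp add: mpoly_eval_companion_poly)
    also have "\<dots> = ?c ^ 2 * ?w n ! 0 * (\<Sum>j<k. companion_coeff k a i j * ?w n ! j)"
      by (simp add: sum_distrib_left power2_eq_square mult_ac)
    also have "(\<Sum>j<k. companion_coeff k a i j * ?w n ! j) = ?w (Suc n) ! i"
      using lrs_window_Suc_nth[OF assms(1) i] by simp
    also have "?c ^ 2 * ?w n ! 0 = companion_scale k a u0 (Suc n)"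
      using assms(2) len[of n] by (simp add: hd_conv_nth[symmetric] length_greater_0_conv[symmetric])
    finally show "p2p_state (map (companion_poly k a) [0..<k]) u0 (Suc n) ! i
        = map (\<lambda>x. companion_scale k a u0 (Suc n) * x) (?w (Suc n)) ! i"
      using i len by (simp del: lrs_window.simps companion_scale.simps)
  qed (simp add: len del: lrs_window.simps)
qed simp

lemma skolem_to_p2p_wf: "skolem_wf I \<Longrightarrow> p2p_wf (skolem_to_p2p I)"
  by (auto simp: skolem_wf_def p2p_wf_def skolem_to_p2p_def companion_poly_def mpoly_wf_def
      y0_yj_exps_def split: prod.splits)

lemma skolem_has_zero_iff_p2p_reaches:
  assumes "skolem_wf I"
  shows "skolem_has_zero I \<longleftrightarrow> p2p_reaches (skolem_to_p2p I)"
proof -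
  obtain k a u0 where I: "I = (k, a, u0)" by (cases I) auto
  have k: "length u0 = k" "0 < k"
    using assms by (auto simp: skolem_wf_def I)
  let ?c = "companion_scale k a u0" and ?w = "lrs_window k a u0"
  have len: "length (?w m) = k" for m
    using k by (rule length_lrs_window)
  have state_eq_0_iff: "map (\<lambda>x. ?c m * x) (?w m) = replicate k 0 \<longleftrightarrow> ?c m = 0 \<or> ?w m = replicate k 0" for m
    using len[of m] by (auto simp: map_replicate_const list_eq_iff_nth_eq)
  have "skolem_has_zero I \<longleftrightarrow> (\<exists>m. hd (?w m) = 0)"
    by (simp add: skolem_has_zero_def lrs_def I)
  also have "\<dots> \<longleftrightarrow> (\<exists>m. map (\<lambda>x. ?c m * x) (?w m) = replicate k 0)"
  proof
    assume "\<exists>m. hd (?w m) = 0"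
    then obtain m where "hd (?w m) = 0" ..
    then have "?c (Suc m) = 0" by simp
    then show "\<exists>m. map (\<lambda>x. ?c m * x) (?w m) = replicate k 0"
      using state_eq_0_iff by blast
  next
    assume "\<exists>m. map (\<lambda>x. ?c m * x) (?w m) = replicate k 0"
    then obtain m where "?c m = 0 \<or> ?w m = replicate k 0"
      using state_eq_0_iff by blast
    then show "\<exists>m. hd (?w m) = 0"
      using companion_scale_eq_0_iff k(2) by (metis hd_replicate less_numeral_extra(3))
  qed
  also have "\<dots> \<longleftrightarrow> p2p_reaches (skolem_to_p2p I)"
    using k by (simp add: p2p_reaches_def skolem_to_p2p_def I p2p_state_companion)
  finally show ?thesis .
qed

definition companion_coeff_code :: "nat \<Rightarrow> nat \<Rightarrow> nat \<Rightarrow> nat \<Rightarrow> nat" where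
  "companion_coeff_code k A i j =
    (if Suc i = k then list_code_nth A j else if j = Suc i then enc_rat 1 else enc_rat 0)"

definition skolem_to_p2p_code :: "nat \<Rightarrow> nat" where
  "skolem_to_p2p_code N =
    (let k = fst (prod_decode N);
         A = fst (prod_decode (snd (prod_decode N)));
         U = snd (prod_decode (snd (prod_decode N)))
     in prod_encode (k, prod_encode (
          list_encode (map (\<lambda>i. list_encode (map (\<lambda>j.
            prod_encode (companion_coeff_code k A i j, list_encode (y0_yj_exps k j))) [0..<k])) [0..<k]),
          prod_encode (U, list_encode (map (\<lambda>_. enc_rat 0) [0..<k])))))"

lemma skolem_to_p2p_code_enc_skolem:
  assumes "length a = k"
  shows "skolem_to_p2p_code (enc_skolem (k, a, u0)) = enc_p2p (skolem_to_p2p (k, a, u0))"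
proof -
  have coeff: "companion_coeff_code k (enc_rats a) i j = enc_rat (companion_coeff k a i j)"
    if "j < k" for i j
    using that assms
    by (simp add: companion_coeff_code_def companion_coeff_def enc_rats_def list_code_nth_list_encode)
  have polys: "list_encode (map (\<lambda>i. list_encode (map (\<lambda>j.
        prod_encode (companion_coeff_code k (enc_rats a) i j, list_encode (y0_yj_exps k j))) [0..<k])) [0..<k])
      = list_encode (map enc_mpoly (map (companion_poly k a) [0..<k]))"
    by (simp add: companion_poly_def enc_mpoly_def enc_mono_def comp_def coeff map_eq_conv list_encode_eq)
  have target: "list_encode (map (\<lambda>_. enc_rat 0) [0..<k]) = enc_rats (replicate k 0)"
    by (simp add: enc_rats_def map_replicate_const)
  show ?thesis
    by (simp add: skolem_to_p2p_code_def enc_skolem_def enc_p2p_def skolem_to_p2p_def polys target)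
qed

lemma computable_y0_yj_exps:
  "computable n k \<Longrightarrow> computable n j \<Longrightarrow> computable n (\<lambda>xs. list_encode (y0_yj_exps (k xs) (j xs)))"
  unfolding y0_yj_exps_def by (intro computable_intros)

lemma computable_companion_coeff_code:
  "computable n k \<Longrightarrow> computable n A \<Longrightarrow> computable n i \<Longrightarrow> computable n j \<Longrightarrow>
    computable n (\<lambda>xs. companion_coeff_code (k xs) (A xs) (i xs) (j xs))"
  unfolding companion_coeff_code_def by (intro computable_intros)

lemma computable_skolem_to_p2p_code: "computable 1 (\<lambda>xs. skolem_to_p2p_code (xs ! 0))"
  unfolding skolem_to_p2p_code_def Let_def
  by (intro computable_intros computable_y0_yj_exps computable_companion_coeff_code computable_nth; simp)

theorem theorem3p3:
  shows "\<exists>R :: recf. \<forall>I :: skolem_inst. skolem_wf I \<longrightarrow>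
           (\<exists>J :: p2p_inst. reval R [enc_skolem I] (enc_p2p J) \<and> p2p_wf J \<and>
                (skolem_has_zero I \<longleftrightarrow> p2p_reaches J))"
proof -
  obtain R where R: "\<And>xs. length xs = 1 \<Longrightarrow> reval R xs (skolem_to_p2p_code (xs ! 0))"
    using computable_skolem_to_p2p_code unfolding computable_def by blast
  have "reval R [enc_skolem I] (enc_p2p (skolem_to_p2p I))" if "skolem_wf I" for I
  proof -
    obtain k a u0 where I: "I = (k, a, u0)" and "length a = k"
      using \<open>skolem_wf I\<close> by (cases I) (auto simp: skolem_wf_def)
    then show ?thesis
      using R[of "[enc_skolem I]"] by (simp add: skolem_to_p2p_code_enc_skolem)
  qed
  then show ?thesis
    using skolem_to_p2p_wf skolem_has_zero_iff_p2p_reaches by blast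
qed

end
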